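(* Let $\mathcal V$ be an operator space and $\mathcal D'\subseteq\mathcal D$ an inclusion of noncommutative domains in $\mathcal V_{\rm nc}$ such that $M:=\sup_{n}\sup_{x\in\mathcal D'_n}\|x\|<+\infty$ and $m:=\inf_{n}\inf\{\|x-w\|\colon x\in\mathcal D'_n,\ w\in\mathcal V^{n\times n}\setminus\mathcal D_n\}>0$, and let $k\in[0,1)$ be a constant with $k\,\tilde\delta_{\mathcal D'}\ge\tilde\delta_{\mathcal D}$ on each level of $\mathcal D'$ (such $k$ exists, e.g. $k=M/(m+M)$). Then $k\,\tilde d_{\mathcal D'}(a,c)\ge\tilde d_{\mathcal D}(a,c)$ for all $n$ and $a,c\in\mathcal D'_n$.
   Context: A noncommutative domain is a family of open sets $\mathcal D_n\subseteq\mathcal V^{n\times n}$ closed under direct sums. $\delta_{\mathcal D}(a,c)(b)=\big[\sup\{t\in[0,+\infty]\colon\begin{bmatrix}a&sb\\0&c\end{bmatrix}\in\mathcal D_{n+m}\ \forall s\in[0,t]\}\big]^{-1}$ ($1/0=+\infty,1/\infty=0$), $\tilde\delta_{\mathcal D}(a,c)=\delta_{\mathcal D}(a,c)(a-c)$, and $\tilde d_{\mathcal D}(a,c)=\inf\{\sum_{j=1}^N\tilde\delta_{\mathcal D}(a_{j-1},a_j)\colon N\in\mathbb N,\ a_0=a,a_N=c,\ a_j\in\mathcal D_n\}$; likewise for $\mathcal D'$ (with divisions in $\mathcal D'_n$). *)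

theory Defs
  imports "HOL-Analysis.Analysis" "HOL-Library.Extended_Real"
begin

text \<open>Matrices over a vector space V are represented as functions nat => nat => V,
  with the level-n (resp. p x q) carrier being those functions supported in
  {0..<p} x {0..<q}.\<close>

type_synonym 'v mx = "nat \<Rightarrow> nat \<Rightarrow> 'v"

definition rmat :: "nat \<Rightarrow> nat \<Rightarrow> ('v::zero) mx set" where
  "rmat p q = {A. \<forall>i j. (p \<le> i \<or> q \<le> j) \<longrightarrow> A i j = 0}"

abbreviation sqmat :: "nat \<Rightarrow> ('v::zero) mx set" where
  "sqmat n \<equiv> rmat n n"

definition mdiff :: "('v::ab_group_add) mx \<Rightarrow> 'v mx \<Rightarrow> 'v mx" where
  "mdiff a c = (\<lambda>i j. a i j - c i j)"

definition madd :: "('v::ab_group_add) mx \<Rightarrow> 'v mx \<Rightarrow> 'v mx" where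
  "madd a c = (\<lambda>i j. a i j + c i j)"

text \<open>The complex vector space V is modelled as a real vector space 'v together with
  a complex structure J (real-linear, J (J x) = -x); complex scalar multiplication is
  z *C x = Re z *R x + Im z *R J x.\<close>
definition cstruct :: "(('v::real_vector) \<Rightarrow> 'v) \<Rightarrow> bool" where
  "cstruct J \<longleftrightarrow> linear J \<and> (\<forall>x. J (J x) = - x)"

definition scC :: "(('v::real_vector) \<Rightarrow> 'v) \<Rightarrow> complex \<Rightarrow> 'v \<Rightarrow> 'v" where
  "scC J z x = Re z *\<^sub>R x + Im z *\<^sub>R J x"

definition mscale :: "(('v::real_vector) \<Rightarrow> 'v) \<Rightarrow> complex \<Rightarrow> 'v mx \<Rightarrow> 'v mx" where
  "mscale J z a = (\<lambda>i j. scC J z (a i j))"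

definition dsum :: "nat \<Rightarrow> ('v::zero) mx \<Rightarrow> 'v mx \<Rightarrow> 'v mx" where
  "dsum n a c = (\<lambda>i j. if i < n \<and> j < n then a i j
      else if n \<le> i \<and> n \<le> j then c (i - n) (j - n) else 0)"

definition ublock :: "nat \<Rightarrow> ('v::real_vector) mx \<Rightarrow> 'v mx \<Rightarrow> 'v mx \<Rightarrow> real \<Rightarrow> 'v mx" where
  "ublock n a b c s = (\<lambda>i j. if i < n \<and> j < n then a i j
      else if i < n \<and> n \<le> j then s *\<^sub>R b i (j - n)
      else if n \<le> i \<and> n \<le> j then c (i - n) (j - n) else 0)"

definition smul :: "('v \<Rightarrow> 'v) \<Rightarrow> nat \<Rightarrow> (nat \<Rightarrow> nat \<Rightarrow> complex) \<Rightarrow> ('v::real_vector) mx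
                     \<Rightarrow> (nat \<Rightarrow> nat \<Rightarrow> complex) \<Rightarrow> 'v mx" where
  "smul J n \<alpha> x \<beta> = (\<lambda>i j. \<Sum>k<n. \<Sum>l<n. scC J (\<alpha> i k * \<beta> l j) (x k l))"

definition cnorm :: "nat \<Rightarrow> nat \<Rightarrow> (nat \<Rightarrow> nat \<Rightarrow> complex) \<Rightarrow> real" where
  "cnorm p q \<alpha> = Sup {sqrt (\<Sum>i<p. (cmod (\<Sum>j<q. \<alpha> i j * v j))\<^sup>2) | v.
                         (\<Sum>j<q. (cmod (v j))\<^sup>2) \<le> 1}"

text \<open>Abstract operator space (Ruan's axioms): a family of norms nrm n on the
  levels V^{n x n}, n >= 1.\<close>
definition opspace :: "('v \<Rightarrow> 'v) \<Rightarrow> (nat \<Rightarrow> ('v::real_vector) mx \<Rightarrow> real) \<Rightarrow> bool" where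
  "opspace J nrm \<longleftrightarrow> cstruct J \<and>
     (\<forall>n\<ge>1. \<forall>x\<in>sqmat n. nrm n x = 0 \<longleftrightarrow> x = (\<lambda>i j. 0)) \<and>
     (\<forall>n\<ge>1. \<forall>x\<in>sqmat n. \<forall>y\<in>sqmat n. nrm n (madd x y) \<le> nrm n x + nrm n y) \<and>
     (\<forall>n\<ge>1. \<forall>x\<in>sqmat n. \<forall>z. nrm n (mscale J z x) = cmod z * nrm n x) \<and>
     (\<forall>n\<ge>1. \<forall>m\<ge>1. \<forall>x\<in>sqmat n. \<forall>y\<in>sqmat m.
        nrm (n + m) (dsum n x y) = max (nrm n x) (nrm m y)) \<and>
     (\<forall>n\<ge>1. \<forall>m\<ge>1. \<forall>x\<in>sqmat n. \<forall>\<alpha>\<in>rmat m n. \<forall>\<beta>\<in>rmat n m.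
        nrm m (smul J n \<alpha> x \<beta>) \<le> cnorm m n \<alpha> * nrm n x * cnorm n m \<beta>)"

definition lvl_open :: "(nat \<Rightarrow> ('v::ab_group_add) mx \<Rightarrow> real) \<Rightarrow> nat \<Rightarrow> 'v mx set \<Rightarrow> bool" where
  "lvl_open nrm n S \<longleftrightarrow>
     (\<forall>x\<in>S. \<exists>e>0. \<forall>y\<in>sqmat n. nrm n (mdiff y x) < e \<longrightarrow> y \<in> S)"

definition nc_domain :: "(nat \<Rightarrow> ('v::ab_group_add) mx \<Rightarrow> real) \<Rightarrow> (nat \<Rightarrow> 'v mx set) \<Rightarrow> bool" where
  "nc_domain nrm D \<longleftrightarrow>
     D 0 = {} \<and>
     (\<forall>n\<ge>1. D n \<subseteq> sqmat n \<and> lvl_open nrm n (D n)) \<and>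
     (\<forall>n m a c. a \<in> D n \<longrightarrow> c \<in> D m \<longrightarrow> dsum n a c \<in> D (n + m))"

definition einv :: "ereal \<Rightarrow> ereal" where
  "einv t = (if t = 0 then \<infinity> else if t = \<infinity> then 0 else ereal (1 / real_of_ereal t))"

definition delta :: "(nat \<Rightarrow> ('v::real_vector) mx set) \<Rightarrow> nat \<Rightarrow> nat \<Rightarrow> 'v mx \<Rightarrow> 'v mx \<Rightarrow> 'v mx \<Rightarrow> ereal" where
  "delta D n m a c b = einv (Sup {t::ereal. 0 \<le> t \<and>
      (\<forall>s::real. 0 \<le> s \<and> ereal s \<le> t \<longrightarrow> ublock n a b c s \<in> D (n + m))})"

definition deltat :: "(nat \<Rightarrow> ('v::real_vector) mx set) \<Rightarrow> nat \<Rightarrow> 'v mx \<Rightarrow> 'v mx \<Rightarrow> ereal" where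
  "deltat D n a c = delta D n n a c (mdiff a c)"

definition dt :: "(nat \<Rightarrow> ('v::real_vector) mx set) \<Rightarrow> nat \<Rightarrow> 'v mx \<Rightarrow> 'v mx \<Rightarrow> ereal" where
  "dt D n a c = Inf {(\<Sum>j<N. deltat D n (f j) (f (Suc j))) | N f.
      N \<ge> 1 \<and> f 0 = a \<and> f N = c \<and> (\<forall>j\<le>N. f j \<in> D n)}"

end

theory Submission
  imports Defs
begin

text \<open>Every chain in \<open>D'\<close> is a chain in \<open>D\<close>, and along it each step costs at most \<open>k\<close>
  times as much in \<open>D\<close> as in \<open>D'\<close>; taking infima over chains gives the claim. The
  operator-space structure, the constants \<open>M\<close>, \<open>m\<close> and \<open>k < 1\<close> only serve to make such
  a \<open>k\<close> exist, which here is a hypothesis.\<close>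

text \<open>Nonemptiness matters for \<open>k = 0\<close>: then \<open>ereal k * Inf {} = 0 * \<infinity> = 0\<close>.\<close>

lemma ereal_le_cmult_Inf:
  fixes y :: ereal and S :: "ereal set"
  assumes "0 \<le> k" and "S \<noteq> {}" and "\<And>x. x \<in> S \<Longrightarrow> y \<le> ereal k * x"
  shows "y \<le> ereal k * Inf S"
proof (cases "k = 0")
  case True
  with assms(2,3) show ?thesis by (auto simp: zero_ereal_def[symmetric])
next
  case False
  with assms(1) have "k > 0" by simp
  have "y \<le> Inf {ereal k * x | x. x \<in> S}"
    using assms(3) by (auto intro: Inf_greatest)
  also have "\<dots> = ereal k * Inf S"
    using ereal_Inf_cmult[OF \<open>k > 0\<close>, of "\<lambda>x. x \<in> S"] by simp
  finally show ?thesis .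
qed

lemma dt_le_chain_sum:
  assumes "N \<ge> 1" and "f 0 = a" and "f N = c" and "\<forall>j\<le>N. f j \<in> D n"
  shows "dt D n a c \<le> (\<Sum>j<N. deltat D n (f j) (f (Suc j)))"
  unfolding dt_def using assms by (intro Inf_lower) blast

lemma dt_le_scaled_dt:
  assumes sub: "D' n \<subseteq> D n" and "0 \<le> k"
    and step: "\<And>a c. a \<in> D' n \<Longrightarrow> c \<in> D' n \<Longrightarrow> deltat D n a c \<le> ereal k * deltat D' n a c"
    and "a \<in> D' n" and "c \<in> D' n"
  shows "dt D n a c \<le> ereal k * dt D' n a c"
proof -
  define S' where "S' = {(\<Sum>j<N. deltat D' n (f j) (f (Suc j))) | N f.
      N \<ge> 1 \<and> f 0 = a \<and> f N = c \<and> (\<forall>j\<le>N. f j \<in> D' n)}"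
  have nonempty: "S' \<noteq> {}"
    unfolding S'_def using \<open>a \<in> D' n\<close> \<open>c \<in> D' n\<close>
    by (auto intro!: exI[of _ 1] exI[of _ "\<lambda>j. if j = 0 then a else c"])
  have bound: "dt D n a c \<le> ereal k * x" if "x \<in> S'" for x
  proof -
    obtain N f where chain: "N \<ge> 1" "f 0 = a" "f N = c" "\<forall>j\<le>N. f j \<in> D' n"
      and x: "x = (\<Sum>j<N. deltat D' n (f j) (f (Suc j)))"
      using \<open>x \<in> S'\<close> unfolding S'_def by blast
    have "dt D n a c \<le> (\<Sum>j<N. deltat D n (f j) (f (Suc j)))"
      using chain sub by (intro dt_le_chain_sum) auto
    also have "\<dots> \<le> (\<Sum>j<N. deltat D' n (f j) (f (Suc j)) * ereal k)"
      using chain(4) step by (intro sum_mono) (simp add: mult.commute)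
    also have "\<dots> = x * ereal k"
      unfolding x by (rule sum_distrib_right_ereal[OF \<open>0 \<le> k\<close>, symmetric])
    finally show ?thesis by (simp only: mult.commute)
  qed
  have "dt D n a c \<le> ereal k * Inf S'"
    using ereal_le_cmult_Inf[OF \<open>0 \<le> k\<close> nonempty bound] .
  then show ?thesis unfolding S'_def dt_def by simp
qed

theorem corollary5p4:
  fixes J :: "('v::real_vector) \<Rightarrow> 'v"
    and nrm :: "nat \<Rightarrow> 'v mx \<Rightarrow> real"
    and D D' :: "nat \<Rightarrow> 'v mx set"
    and k :: real
  assumes "opspace J nrm"
    and "nc_domain nrm D"
    and "nc_domain nrm D'"
    and "\<forall>n. D' n \<subseteq> D n"
    and "\<exists>M. \<forall>n x. x \<in> D' n \<longrightarrow> nrm n x \<le> M"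
    and "\<exists>\<mu>>0. \<forall>n x w. x \<in> D' n \<longrightarrow> w \<in> sqmat n - D n \<longrightarrow> \<mu> \<le> nrm n (mdiff x w)"
    and "0 \<le> k" and "k < 1"
    and "\<forall>n a c. a \<in> D' n \<longrightarrow> c \<in> D' n \<longrightarrow> deltat D n a c \<le> ereal k * deltat D' n a c"
  shows "\<forall>n a c. a \<in> D' n \<longrightarrow> c \<in> D' n \<longrightarrow> dt D n a c \<le> ereal k * dt D' n a c"
  using assms(4,7,9) by (blast intro: dt_le_scaled_dt)

end
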